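(* Let $a>1$ be an integer. If $n_1$ and $n_2$ are overpseudoprimes to base $a$ with $h_a(n_1)\neq h_a(n_2)$, then $\gcd(n_1,n_2)=1$.
   Context: For an integer $a>1$ and an odd integer $n>1$ with $\gcd(a,n)=1$: $h_a(n)$ denotes the multiplicative order of $a$ modulo $n$. A cyclotomic coset of $a$ modulo $n$ is a set of the form $\{\, s a^j \bmod n : j\ge 0\,\}$ with $s\in\{1,\dots,n-1\}$; these cosets partition $\{1,\dots,n-1\}$, and $r_a(n)$ denotes the number of distinct cyclotomic cosets of $a$ modulo $n$. An odd composite number $n$ coprime to $a$ is called an overpseudoprime to base $a$ if $n=r_a(n)\,h_a(n)+1$. *)

theory Defs
  imports "HOL-Number_Theory.Number_Theory"
begin

definition h_ord :: "nat \<Rightarrow> nat \<Rightarrow> nat" where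
  "h_ord a n = ord n a"

definition cyclotomic_coset :: "nat \<Rightarrow> nat \<Rightarrow> nat \<Rightarrow> nat set" where
  "cyclotomic_coset a n s = {s * a ^ j mod n | j. True}"

definition r_cos :: "nat \<Rightarrow> nat \<Rightarrow> nat" where
  "r_cos a n = card {cyclotomic_coset a n s | s. s \<in> {1..<n}}"

definition overpseudoprime :: "nat \<Rightarrow> nat \<Rightarrow> bool" where
  "overpseudoprime a n \<longleftrightarrow> odd n \<and> n > 1 \<and> \<not> prime n \<and> coprime a n \<and>
     n = r_cos a n * h_ord a n + 1"

end

theory Submission
  imports Defs
begin

(*
  The cyclotomic cosets of a modulo n cover {1..<n}, and each of them has at
  most h = h_a(n) elements, since s a^j mod n only depends on j mod h.  Hence
  n - 1 <= r_a(n) h, and the overpseudoprime condition n - 1 = r_a(n) h says that this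
  bound is tight: EVERY coset has exactly h elements.  For a divisor d > 1 of n the
  coset of s = n/d is {(n/d) (a^j mod d)}, which has at most ord_d(a) elements, so
  h <= ord_d(a); conversely ord_d(a) divides h.  Thus ord_d(a) = h_a(n) for every
  divisor d > 1 of an overpseudoprime n.  If n1, n2 shared a divisor d = gcd n1 n2 > 1,
  we would get h_a(n1) = ord_d(a) = h_a(n2).
*)

lemma cong_mult_power_period:
  fixes s a k n :: nat
  assumes period: "[s * a ^ k = s] (mod n)"
  shows "[s * a ^ j = s * a ^ (j mod k)] (mod n)"
proof -
  have multiple: "[s * a ^ (k * q) = s] (mod n)" for q
  proof (induction q)
    case 0
    show ?case by simp
  next
    case (Suc q)
    have "s * a ^ (k * Suc q) = (s * a ^ (k * q)) * a ^ k"
      by (simp add: power_add ac_simps)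
    also have "[\<dots> = s * a ^ k] (mod n)"
      using Suc.IH by (intro cong_mult cong_refl)
    finally show ?case using period by (rule cong_trans)
  qed
  have "s * a ^ j = s * a ^ (k * (j div k) + j mod k)" by simp
  also have "\<dots> = (s * a ^ (k * (j div k))) * a ^ (j mod k)"
    by (simp only: power_add mult.assoc)
  also have "[\<dots> = s * a ^ (j mod k)] (mod n)"
    using multiple by (intro cong_mult cong_refl)
  finally show ?thesis .
qed

lemma card_cyclotomic_coset_le_period:
  fixes a n s k :: nat
  assumes "k > 0" and "[s * a ^ k = s] (mod n)"
  shows "card (cyclotomic_coset a n s) \<le> k"
proof -
  have "cyclotomic_coset a n s \<subseteq> (\<lambda>j. s * a ^ j mod n) ` {..<k}"
  proof
    fix x assume "x \<in> cyclotomic_coset a n s"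
    then obtain j where "x = s * a ^ j mod n" unfolding cyclotomic_coset_def by auto
    hence "x = s * a ^ (j mod k) mod n"
      using cong_mult_power_period[OF assms(2)] by (simp add: cong_def)
    thus "x \<in> (\<lambda>j. s * a ^ j mod n) ` {..<k}" using \<open>k > 0\<close> by auto
  qed
  hence "card (cyclotomic_coset a n s) \<le> card ((\<lambda>j. s * a ^ j mod n) ` {..<k})"
    by (intro card_mono) auto
  also have "\<dots> \<le> k" using card_image_le[of "{..<k}"] by simp
  finally show ?thesis .
qed

lemma card_cyclotomic_coset_le_ord:
  fixes a n s :: nat
  assumes "coprime a n"
  shows "card (cyclotomic_coset a n s) \<le> ord n a"
proof (rule card_cyclotomic_coset_le_period)
  show "ord n a > 0" using assms by (simp add: coprime_commute)
  have "[s * a ^ ord n a = s * 1] (mod n)" by (intro cong_mult cong_refl ord)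
  thus "[s * a ^ ord n a = s] (mod n)" by simp
qed

text \<open>For a divisor d of n, the coset of n/d consists of the numbers (n/d) (a^j mod d),
  so it has at most ord_d(a) elements.\<close>

lemma card_cyclotomic_coset_le_ord_divisor:
  fixes a n d :: nat
  assumes "coprime a d" and "d dvd n"
  shows "card (cyclotomic_coset a n (n div d)) \<le> ord d a"
proof (rule card_cyclotomic_coset_le_period)
  let ?s = "n div d" and ?k = "ord d a"
  show "?k > 0" using assms(1) by (simp add: coprime_commute)
  have n: "n = ?s * d" using assms(2) by simp
  have "?s * a ^ ?k mod (?s * d) = ?s * (a ^ ?k mod d)"
    by (rule mult_mod_right[symmetric])
  also have "\<dots> = ?s * (1 mod d)" using ord[of a d] by (simp add: cong_def)
  also have "\<dots> = ?s mod (?s * d)" by (simp add: mult_mod_right)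
  finally show "[?s * a ^ ?k = ?s] (mod n)" using n by (simp add: cong_def)
qed

lemma self_in_cyclotomic_coset:
  fixes a n s :: nat
  assumes "s < n"
  shows "s \<in> cyclotomic_coset a n s"
  unfolding cyclotomic_coset_def using assms by (auto intro!: exI[of _ 0])

lemma cyclotomic_coset_subset:
  fixes a n s :: nat
  assumes "coprime a n" and "s \<in> {1..<n}"
  shows "cyclotomic_coset a n s \<subseteq> {1..<n}"
proof
  fix x assume "x \<in> cyclotomic_coset a n s"
  then obtain j where x: "x = s * a ^ j mod n" unfolding cyclotomic_coset_def by auto
  have "x \<noteq> 0"
  proof
    assume "x = 0"
    hence "n dvd s * a ^ j" using x by auto
    moreover have "coprime n (a ^ j)" using assms(1) by (simp add: coprime_commute)
    ultimately have "n dvd s" using coprime_dvd_mult_left_iff by blast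
    thus False using assms(2) by (auto dest: dvd_imp_le)
  qed
  moreover have "x < n" using x assms(2) by simp
  ultimately show "x \<in> {1..<n}" by auto
qed

lemma tight_cover_card_eq:
  fixes U :: "'a set set" and h :: nat
  assumes "finite U"
    and le: "\<And>C. C \<in> U \<Longrightarrow> card C \<le> h"
    and tight: "card U * h \<le> card (\<Union>U)"
    and "C \<in> U"
  shows "card C = h"
proof (rule ccontr)
  assume "card C \<noteq> h"
  hence "card C < h" using le[OF \<open>C \<in> U\<close>] by simp
  hence "sum card U < sum (\<lambda>_. h) U"
    using \<open>C \<in> U\<close> le \<open>finite U\<close> by (intro sum_strict_mono_ex1) auto
  also have "\<dots> = card U * h" by simp
  finally show False using tight card_Union_le_sum_card[of U] by simp
qed

lemma overpseudoprime_card_coset: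
  fixes a n s :: nat
  assumes "overpseudoprime a n" and "s \<in> {1..<n}"
  shows "card (cyclotomic_coset a n s) = h_ord a n"
proof -
  from assms(1) have cop: "coprime a n" and eq: "n = r_cos a n * h_ord a n + 1"
    unfolding overpseudoprime_def by auto
  define U where "U = cyclotomic_coset a n ` {1..<n}"
  have "U = {cyclotomic_coset a n s | s. s \<in> {1..<n}}" unfolding U_def by auto
  hence "card U = r_cos a n" unfolding r_cos_def by simp
  moreover have "\<Union>U = {1..<n}"
    unfolding U_def using cyclotomic_coset_subset[OF cop] self_in_cyclotomic_coset by fastforce
  ultimately have "card U * h_ord a n \<le> card (\<Union>U)" using eq by simp
  moreover have "cyclotomic_coset a n s \<in> U" using assms(2) unfolding U_def by simp
  ultimately show ?thesis
    using tight_cover_card_eq[of U "h_ord a n"] card_cyclotomic_coset_le_ord[OF cop]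
    unfolding U_def h_ord_def by blast
qed

lemma overpseudoprime_ord_divisor:
  fixes a n d :: nat
  assumes "overpseudoprime a n" and "d dvd n" and "d > 1"
  shows "ord d a = h_ord a n"
proof (rule antisym)
  from assms(1) have cop: "coprime a n" and "n > 1" unfolding overpseudoprime_def by auto
  hence cop_d: "coprime a d" using assms(2) coprime_imp_coprime dvd_trans by blast
  have "[a ^ h_ord a n = 1] (mod d)"
    using ord[of a n] assms(2) cong_dvd_modulus_nat unfolding h_ord_def by blast
  hence "ord d a dvd h_ord a n" by (rule ord_divides[THEN iffD1])
  moreover have "h_ord a n > 0" using cop unfolding h_ord_def by (simp add: coprime_commute)
  ultimately show "ord d a \<le> h_ord a n" by (rule dvd_imp_le)
  have "n div d \<in> {1..<n}"
    using assms \<open>n > 1\<close> by (auto simp: div_greater_zero_iff dvd_imp_le intro!: div_less_dividend)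
  hence "h_ord a n = card (cyclotomic_coset a n (n div d))"
    using overpseudoprime_card_coset[OF assms(1)] by simp
  also have "\<dots> \<le> ord d a" using card_cyclotomic_coset_le_ord_divisor[OF cop_d assms(2)] .
  finally show "h_ord a n \<le> ord d a" .
qed

theorem corollary1:
  fixes a n1 n2 :: nat
  assumes "a > 1"
    and "overpseudoprime a n1" and "overpseudoprime a n2"
    and "h_ord a n1 \<noteq> h_ord a n2"
  shows "gcd n1 n2 = 1"
proof (rule ccontr)
  assume "gcd n1 n2 \<noteq> 1"
  moreover have "gcd n1 n2 > 0" using assms(2) unfolding overpseudoprime_def by simp
  ultimately have common: "gcd n1 n2 > 1" by linarith
  have "ord (gcd n1 n2) a = h_ord a n1"
    using overpseudoprime_ord_divisor[OF assms(2) gcd_dvd1 common] .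
  moreover have "ord (gcd n1 n2) a = h_ord a n2"
    using overpseudoprime_ord_divisor[OF assms(3) gcd_dvd2 common] .
  ultimately show False using assms(4) by simp
qed

end
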